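(* Let $k,n\in\mathbb{N}$ and $m\in\mathbb{N}_0$ with $n+1>k>m\ge 0$. Then \[ \frac{1}{n!}\int_0^\infty \frac{x^n e^{mx}}{(e^{x}-1)^{k}}\,dx=\sum_{i=0}^{k-1} q_{k,i}(k-m)\,\zeta(n+1-i), \] where $\zeta$ is the Riemann zeta function.
   Context: $S_N^{(l)}$ denotes the (signed) Stirling numbers of the first kind, defined by $x(x-1)\cdots(x-N+1)=\sum_{l=0}^{N}S_N^{(l)}x^l$. For $N\in\mathbb{N}$, $0\le j\le N-1$ and $a\in\mathbb{R}$, the coefficients are \[ q_{N,j}(a)=\frac{1}{(N-1)!}\sum_{l=j}^{N-1}(-1)^{N+l-1}\binom{l}{j}S_{N-1}^{(l)}(1-a)^{l-j}. \] *)

theory Defs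
  imports "HOL-Analysis.Analysis" "HOL-Combinatorics.Stirling"
begin

text \<open>Signed Stirling numbers of the first kind S_N^(l), characterised by
  x(x-1)...(x-N+1) = sum_l S_N^(l) x^l; obtained from the library's unsigned
  numbers (rising factorial coefficients) by the sign (-1)^(N+l).\<close>
definition signed_stirling :: "nat \<Rightarrow> nat \<Rightarrow> real" where
  "signed_stirling N l = (-1) ^ (N + l) * real (stirling N l)"

definition q_coeff :: "nat \<Rightarrow> nat \<Rightarrow> real \<Rightarrow> real" where
  "q_coeff N j a = (1 / fact (N - 1)) *
     (\<Sum>l = j..N - 1. (-1) ^ (N + l - 1) * real (l choose j)
        * signed_stirling (N - 1) l * (1 - a) ^ (l - j))"

text \<open>Riemann zeta function on the half-line s > 1 (Dirichlet series).\<close>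
definition riemann_zeta :: "real \<Rightarrow> real" where
  "riemann_zeta s = (\<Sum>j. 1 / (real (Suc j)) powr s)"

end

theory Submission
  imports Defs "HOL-Probability.Distributions"
begin

(* With a = k - m, the negative binomial series expands exp(m x) / (exp x - 1)^k as
   sum_j c_j exp(-(j+1) x) with nonnegative coefficients c_j = (j + 2 - a)^(k-1) / (k-1)!
   (rising factorial). Integrating termwise by monotone convergence, using
   int_0^oo x^n exp(-c x) dx = n! / c^(n+1), the left side becomes sum_j c_j / (j+1)^(n+1).
   Expanding the rising factorial by Stirling numbers and the binomial theorem shows that
   c_j is the polynomial sum_i q_{k,i}(a) (j+1)^i of degree k - 1 < n, so the series splits
   into the zeta values zeta(n+1-i). *)

lemma pochhammer_shifted_eq_0:
  assumes "i < a" "a \<le> i + n"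
  shows "pochhammer (real i - real a + 1) n = (0 :: real)"
proof -
  have "real i - real a + 1 = - real (a - Suc i)" and "a - Suc i < n"
    using assms by auto
  then show ?thesis
    by (subst pochhammer_eq_0_iff) blast
qed

lemma pochhammer_shifted_nonneg:
  assumes "a \<le> i + n"
  shows "0 \<le> pochhammer (real i - real a + 1) n"
proof (cases "a \<le> i")
  case True
  then show ?thesis by (intro pochhammer_nonneg) simp
qed (use assms pochhammer_shifted_eq_0 in auto)

lemma pochhammer_div_fact_swap:
  assumes "k \<ge> 1"
  shows "pochhammer (real k) j / fact j = pochhammer (real j + 1) (k - 1) / (fact (k - 1) :: real)"
proof -
  have "pochhammer 1 j * pochhammer (1 + real j) (k - 1) = pochhammer (1::real) (j + (k - 1))"
    by (rule pochhammer_product' [symmetric])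
  also have "\<dots> = pochhammer 1 (k - 1) * pochhammer (1 + real (k - 1)) j"
    by (subst add.commute) (rule pochhammer_product')
  finally have "fact j * pochhammer (real j + 1) (k - 1) = fact (k - 1) * pochhammer (real k) j"
    using assms by (simp add: pochhammer_fact add.commute)
  then show ?thesis
    by (simp add: field_simps)
qed

lemma sums_negative_binomial:
  fixes z :: real
  assumes "k \<ge> 1" "\<bar>z\<bar> < 1"
  shows "(\<lambda>j. pochhammer (real j + 1) (k - 1) / fact (k - 1) * z ^ j) sums (1 / (1 - z) ^ k)"
proof -
  have "(\<lambda>j. (- real k gchoose j) * (- z) ^ j) sums (1 + - z) powr - real k"
    by (rule gen_binomial_real) (use assms in simp)
  moreover have "(- real k gchoose j) * (- z) ^ j = pochhammer (real k) j / fact j * z ^ j" for j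
    by (simp add: gbinomial_pochhammer power_mult_distrib [symmetric] flip: power_minus)
  moreover have "(1 + - z) powr - real k = 1 / (1 - z) ^ k"
    using assms by (simp add: powr_minus powr_realpow divide_inverse)
  ultimately show ?thesis
    using pochhammer_div_fact_swap [OF assms(1)] by simp
qed

lemma sums_power_div_one_minus_power:
  fixes z :: real
  assumes "1 \<le> a" "a \<le> k" "\<bar>z\<bar> < 1"
  shows "(\<lambda>j. pochhammer (real (Suc j) - real a + 1) (k - 1) / fact (k - 1) * z ^ Suc j)
           sums (z ^ a / (1 - z) ^ k)"
proof -
  define g where "g j = pochhammer (real (Suc j) - real a + 1) (k - 1) / fact (k - 1) * z ^ Suc j" for j
  have "(\<lambda>j. z ^ a * (pochhammer (real j + 1) (k - 1) / fact (k - 1) * z ^ j)) sums (z ^ a * (1 / (1 - z) ^ k))"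
    using assms by (intro sums_mult sums_negative_binomial) auto
  moreover have "g (j + (a - 1)) = z ^ a * (pochhammer (real j + 1) (k - 1) / fact (k - 1) * z ^ j)" for j
    using assms by (simp add: g_def power_add Suc_diff_le)
  ultimately have "(\<lambda>j. g (j + (a - 1))) sums (z ^ a / (1 - z) ^ k)"
    by simp
  moreover have "(\<Sum>j<a - 1. g j) = 0"
  proof (intro sum.neutral ballI)
    fix j
    assume "j \<in> {..<a - 1}"
    then have "pochhammer (real (Suc j) - real a + 1) (k - 1) = 0"
      using assms by (intro pochhammer_shifted_eq_0) auto
    then show "g j = 0"
      by (simp add: g_def)
  qed
  ultimately show ?thesis
    unfolding g_def [symmetric] by (simp add: sums_iff_shift)
qed

lemma sums_exp_div_exp_minus_one_power:
  assumes "m < k" "0 < x"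
  shows "(\<lambda>j. pochhammer (real (Suc j) - (real k - real m) + 1) (k - 1) / fact (k - 1)
              * exp (- (real (Suc j) * x)))
           sums (exp (real m * x) / (exp x - 1) ^ k)"
proof -
  have "\<bar>exp (- x)\<bar> < 1"
    using assms by simp
  then have "(\<lambda>j. pochhammer (real (Suc j) - real (k - m) + 1) (k - 1) / fact (k - 1) * exp (- x) ^ Suc j)
      sums (exp (- x) ^ (k - m) / (1 - exp (- x)) ^ k)"
    using assms by (intro sums_power_div_one_minus_power) auto
  moreover have "exp (- x) ^ Suc j = exp (- (real (Suc j) * x))" for j
    by (simp add: algebra_simps flip: exp_of_nat_mult exp_add)
  moreover have "exp (- x) ^ (k - m) / (1 - exp (- x)) ^ k = exp (real m * x) / (exp x - 1) ^ k"
  proof -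
    obtain d where d: "k = m + d"
      using assms less_imp_add_positive by blast
    have "exp (- x) ^ (k - m) * exp x ^ k = (exp (- x) * exp x) ^ d * exp x ^ m"
      by (simp add: d power_add power_mult_distrib)
    then have "exp (- x) ^ (k - m) * exp x ^ k = exp (real m * x)"
      by (simp add: exp_minus flip: exp_of_nat_mult)
    moreover have "(1 - exp (- x)) * exp x = exp x - 1"
      by (simp add: exp_minus field_simps)
    ultimately show ?thesis
      by (metis mult_divide_mult_cancel_right power_mult_distrib power_not_zero exp_not_eq_zero)
  qed
  ultimately show ?thesis
    using assms by simp
qed

lemma q_coeff_Suc:
  "q_coeff (Suc N) j a =
     (\<Sum>l = j..N. real (l choose j) * real (stirling N l) * (1 - a) ^ (l - j)) / fact N"
proof -
  have sign: "(-1) ^ (Suc N + l - 1) * real (l choose j) * signed_stirling N l * (1 - a) ^ (l - j)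
      = real (l choose j) * real (stirling N l) * (1 - a) ^ (l - j)" for l
  proof -
    have "(-1::real) ^ (Suc N + l - 1) * (-1) ^ (N + l) = 1"
      by (simp flip: power_add)
    then show ?thesis
      unfolding signed_stirling_def by (metis (no_types, lifting) mult.assoc mult.left_commute mult_1)
  qed
  then show ?thesis
    by (simp only: q_coeff_def diff_Suc_1 sign) simp
qed

lemma q_coeff_polynomial:
  assumes "k \<ge> 1"
  shows "(\<Sum>i = 0..k - 1. q_coeff k i a * y ^ i) = pochhammer (y - a + 1) (k - 1) / fact (k - 1)"
proof -
  have atLeastAtMost_eq_restrict: "{i..N} = {l. l \<in> {..N} \<and> i \<le> l}" for i N :: nat
    by auto
  obtain N where k: "k = Suc N"
    using assms by (cases k) auto
  have "(\<Sum>i\<le>N. (\<Sum>l = i..N. real (l choose i) * real (stirling N l) * (1 - a) ^ (l - i)) * y ^ i)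
      = (\<Sum>i\<le>N. \<Sum>l\<in>{l. l \<in> {..N} \<and> i \<le> l}. real (stirling N l) * (real (l choose i) * y ^ i * (1 - a) ^ (l - i)))"
    by (simp add: atLeastAtMost_eq_restrict sum_distrib_left sum_distrib_right mult_ac)
  also have "\<dots> = (\<Sum>l\<le>N. real (stirling N l) * (\<Sum>i\<le>l. real (l choose i) * y ^ i * (1 - a) ^ (l - i)))"
    by (subst sum.swap_restrict) (auto simp: sum_distrib_left intro!: sum.cong)
  also have "\<dots> = (\<Sum>l\<le>N. real (stirling N l) * (y + (1 - a)) ^ l)"
    by (simp add: binomial_ring)
  also have "\<dots> = pochhammer (y - a + 1) N"
    by (simp add: stirling_pochhammer algebra_simps)
  finally show ?thesis
    by (simp add: k q_coeff_Suc atLeast0AtMost flip: sum_divide_distrib)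
qed

lemma riemann_zeta_sums:
  assumes "s \<ge> 2"
  shows "(\<lambda>j. 1 / real (Suc j) ^ s) sums riemann_zeta (real s)"
proof -
  have "summable (\<lambda>j. inverse (real j ^ s))"
    using assms by (intro inverse_power_summable) auto
  then have "summable (\<lambda>j. inverse (real (Suc j) ^ s))"
    by (subst summable_Suc_iff)
  then show ?thesis
    unfolding riemann_zeta_def by (simp add: powr_realpow divide_inverse summable_sums)
qed

lemma sums_polynomial_div_power:
  assumes "d < n"
  shows "(\<lambda>j. (\<Sum>i = 0..d. b i * real (Suc j) ^ i) / real (Suc j) ^ (n + 1))
           sums (\<Sum>i = 0..d. b i * riemann_zeta (real (n + 1 - i)))"
proof -
  have "(\<lambda>j. \<Sum>i = 0..d. b i * (1 / real (Suc j) ^ (n + 1 - i)))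
      sums (\<Sum>i = 0..d. b i * riemann_zeta (real (n + 1 - i)))"
    using assms by (intro sums_sum sums_mult riemann_zeta_sums) auto
  moreover have "(\<Sum>i = 0..d. b i * real (Suc j) ^ i) / real (Suc j) ^ (n + 1)
      = (\<Sum>i = 0..d. b i * (1 / real (Suc j) ^ (n + 1 - i)))" for j
    unfolding sum_divide_distrib
    using assms by (intro sum.cong refl) (simp add: power_diff del: of_nat_Suc)
  ultimately show ?thesis
    by simp
qed

lemma has_integral_power_mult_exp_neg:
  fixes c :: real
  assumes "c > 0"
  shows "((\<lambda>x. x ^ n * exp (- (c * x))) has_integral fact n / c ^ Suc n) {0<..}"
proof -
  have "((\<lambda>x. exponential_density c x * x ^ n) has_integral fact n / c ^ n) UNIV"
  proof (rule nn_integral_has_integral)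
    show "(\<integral>\<^sup>+x. ennreal (exponential_density c x * x ^ n) \<partial>lborel) = ennreal (fact n / c ^ n)"
      using nn_integral_erlang_ith_moment [OF assms, of 0 n] assms by (simp add: ennreal_mult)
  qed (use assms in \<open>auto simp: erlang_density_def\<close>)
  then have "((\<lambda>x. (1 / c) * (exponential_density c x * x ^ n)) has_integral (1 / c) * (fact n / c ^ n)) UNIV"
    by (rule has_integral_mult_right)
  moreover have "(1 / c) * (exponential_density c x * x ^ n)
      = (if x \<in> {0..} then x ^ n * exp (- (c * x)) else 0)" for x
    using assms by (simp add: erlang_density_def)
  ultimately have "((\<lambda>x. if x \<in> {0..} then x ^ n * exp (- (c * x)) else 0)
      has_integral fact n / c ^ Suc n) UNIV"
    by simp
  then have "((\<lambda>x. x ^ n * exp (- (c * x))) has_integral fact n / c ^ Suc n) {0..}"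
    by (simp only: has_integral_restrict_UNIV)
  then show ?thesis
    by (rule has_integral_spike_set_eq [THEN iffD1, rotated -1])
       (auto intro: negligible_subset [of "{0}"])
qed

lemma has_integral_suminf_nonneg:
  fixes f :: "nat \<Rightarrow> 'a::euclidean_space \<Rightarrow> real"
  assumes "\<And>j. (f j has_integral I j) S"
    and "\<And>j x. x \<in> S \<Longrightarrow> 0 \<le> f j x"
    and "\<And>x. x \<in> S \<Longrightarrow> (\<lambda>j. f j x) sums g x"
    and "I sums s"
  shows "(g has_integral s) S"
proof (rule has_integral_monotone_convergence_increasing)
  show "((\<lambda>x. \<Sum>j<N. f j x) has_integral (\<Sum>j<N. I j)) S" for N
    using assms(1) by (rule has_integral_sum [OF finite_lessThan])
qed (use assms(2-4) in \<open>auto simp: sums_def\<close>)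

theorem mainTheorem2:
  fixes k n m :: nat
  assumes "k \<ge> 1" and "n \<ge> 1" and "n + 1 > k" and "k > m"
  shows "((\<lambda>x::real. (1 / fact n) * (x ^ n * exp (real m * x) / (exp x - 1) ^ k))
           has_integral
           (\<Sum>i = 0..k - 1. q_coeff k i (real k - real m) * riemann_zeta (real (n + 1 - i))))
         {0<..}"
proof -
  define c where "c j = pochhammer (real (Suc j) - (real k - real m) + 1) (k - 1) / fact (k - 1)" for j
  have c_nonneg: "0 \<le> c j" for j
    using pochhammer_shifted_nonneg [of "k - m" "Suc j" "k - 1"] assms by (simp add: c_def)
  have c_poly: "c j = (\<Sum>i = 0..k - 1. q_coeff k i (real k - real m) * real (Suc j) ^ i)" for j
    unfolding c_def by (rule q_coeff_polynomial [symmetric]) fact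
  show ?thesis
  proof (rule has_integral_suminf_nonneg)
    show "((\<lambda>x. c j / fact n * (x ^ n * exp (- (real (Suc j) * x))))
        has_integral c j / real (Suc j) ^ (n + 1)) {0<..}" for j
      using has_integral_mult_right [OF has_integral_power_mult_exp_neg [of "real (Suc j)" n],
          where c = "c j / fact n"]
      by simp
    show "0 \<le> c j / fact n * (x ^ n * exp (- (real (Suc j) * x)))" if "x \<in> {0<..}" for j x
      using c_nonneg that by simp
    show "(\<lambda>j. c j / fact n * (x ^ n * exp (- (real (Suc j) * x))))
        sums (1 / fact n * (x ^ n * exp (real m * x) / (exp x - 1) ^ k))" if "x \<in> {0<..}" for x
      using sums_mult [OF sums_exp_div_exp_minus_one_power [OF assms(4)], of x "x ^ n / fact n"] that
      by (simp add: c_def mult_ac)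
    show "(\<lambda>j. c j / real (Suc j) ^ (n + 1))
        sums (\<Sum>i = 0..k - 1. q_coeff k i (real k - real m) * riemann_zeta (real (n + 1 - i)))"
      unfolding c_poly by (rule sums_polynomial_div_power) (use assms in simp)
  qed
qed

end
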